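(* Let $(p_n)$ be a sequence of positive integers with $p_n\to+\infty$, and for each $n$ let $\mathbf{U}_{n1},\ldots,\mathbf{U}_{nn}$ be i.i.d. uniform on $\mathcal{S}^{p_n-1}$. Let $\mathcal{F}_{n\ell}$ be the $\sigma$-algebra generated by $\mathbf{U}_{n1},\ldots,\mathbf{U}_{n\ell}$ ($\mathcal{F}_{n0}$ trivial), ${\rm E}_{n\ell}$ the conditional expectation given $\mathcal{F}_{n\ell}$, and $$D^R_{n\ell}=\frac{\sqrt{2p_n}}{n}\sum_{i=1}^{\ell-1}\mathbf{U}_{ni}'\mathbf{U}_{n\ell},\qquad \ell=1,\ldots,n$$ (an empty sum being zero). Letting $\sigma^2_{n\ell}={\rm E}_{n,\ell-1}[(D^R_{n\ell})^2]$, the sum $\sum_{\ell=1}^n\sigma^2_{n\ell}$ converges to $1$ in quadratic mean as $n\to\infty$.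
   Context: $\mathcal{S}^{p-1}$ denotes the unit sphere of $\mathbb{R}^p$. *)

theory Defs
  imports "HOL-Probability.Probability"
begin

text \<open>Vectors of R^p are represented as functions nat => real, extensional on {..<p}
  (elements of the space of the product measure below).\<close>

definition Rp :: "nat \<Rightarrow> (nat \<Rightarrow> real) measure" where
  "Rp p = Pi\<^sub>M {..<p} (\<lambda>_. lborel)"

definition vinner :: "nat \<Rightarrow> (nat \<Rightarrow> real) \<Rightarrow> (nat \<Rightarrow> real) \<Rightarrow> real" where
  "vinner p x y = (\<Sum>k<p. x k * y k)"

definition vnorm :: "nat \<Rightarrow> (nat \<Rightarrow> real) \<Rightarrow> real" where
  "vnorm p x = sqrt (vinner p x x)"

text \<open>Uniform distribution on the unit sphere S^{p-1}: the normalized surface (cone) measure,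
  i.e. the image of the uniform distribution on the closed unit ball under radial projection.\<close>

definition uniform_sphere :: "nat \<Rightarrow> (nat \<Rightarrow> real) measure" where
  "uniform_sphere p =
     distr (uniform_measure (Rp p) {x \<in> space (Rp p). vnorm p x \<le> 1}) (Rp p)
       (\<lambda>x. if vnorm p x = 0 then x else restrict (\<lambda>k. x k / vnorm p x) {..<p})"

definition gen_sigma :: "'a measure \<Rightarrow> 'b measure \<Rightarrow> ('i \<Rightarrow> 'a \<Rightarrow> 'b) \<Rightarrow> 'i set \<Rightarrow> 'a measure" where
  "gen_sigma M N X I =
     sigma (space M) (\<Union>i\<in>I. {X i -` A \<inter> space M | A. A \<in> sets N})"

end

theory Submission
  imports Defs
begin

text \<open>
  Write S_l = U_1 + ... + U_(l-1) and X_l = U_l' S_l, so that D_l = sqrt(2p)/n X_l.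
  The uniform distribution on the sphere is invariant under coordinate reflections and
  transpositions, so U_l is centred with covariance I/p; being independent of F_(l-1), it
  gives sigma_l^2 = 2 |S_l|^2 / n^2. Since the U_i are unit vectors,
  |S_l|^2 = (l - 1) + 2 (X_1 + ... + X_(l-1)), whence
  sigma_1^2 + ... + sigma_n^2 - 1 = 4 W / n^2 - 1/n with W = sum_j (n - j) X_j.
  The X_j are orthogonal in L^2 with E X_j^2 = (j - 1)/p, so E W^2 <= n^4/p and the mean
  square of the deviation is at most 32/p + 2/n^2, which tends to 0 as p_n tends to infinity.
\<close>

section \<open>Symmetries of the uniform distribution on the sphere\<close>

definition unit_ball :: "nat \<Rightarrow> (nat \<Rightarrow> real) set" where
  "unit_ball p = {x \<in> space (Rp p). vnorm p x \<le> 1}"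

definition radial_proj :: "nat \<Rightarrow> (nat \<Rightarrow> real) \<Rightarrow> nat \<Rightarrow> real" where
  "radial_proj p x = (if vnorm p x = 0 then x else restrict (\<lambda>k. x k / vnorm p x) {..<p})"

lemma uniform_sphere_eq_distr_unit_ball:
  "uniform_sphere p = distr (uniform_measure (Rp p) (unit_ball p)) (Rp p) (radial_proj p)"
  unfolding uniform_sphere_def unit_ball_def radial_proj_def ..

lemma space_Rp: "space (Rp p) = PiE {..<p} (\<lambda>_. UNIV)"
  unfolding Rp_def by (simp add: space_PiM)

lemma measurable_radial_proj[measurable]: "radial_proj p \<in> measurable (Rp p) (Rp p)"
  unfolding radial_proj_def vnorm_def vinner_def Rp_def by measurable

lemma sets_unit_ball[measurable]: "unit_ball p \<in> sets (Rp p)"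
  unfolding unit_ball_def vnorm_def vinner_def Rp_def by measurable

lemma measurable_sqnorm_Rp[measurable]: "(\<lambda>y. vinner p y y) \<in> borel_measurable (Rp p)"
  unfolding vinner_def Rp_def by measurable

lemma measurable_coord_Rp[measurable]: "k < p \<Longrightarrow> (\<lambda>y. y k) \<in> borel_measurable (Rp p)"
  unfolding Rp_def by measurable

lemma borel_measurable_vinner:
  assumes "\<And>k. k < p \<Longrightarrow> (\<lambda>x. f x k) \<in> borel_measurable N"
    and "\<And>k. k < p \<Longrightarrow> (\<lambda>x. g x k) \<in> borel_measurable N"
  shows "(\<lambda>x. vinner p (f x) (g x)) \<in> borel_measurable N"
  unfolding vinner_def using assms by (intro borel_measurable_sum borel_measurable_times) auto

lemma sum_vinner_left: "(\<Sum>i\<in>I. vinner p (f i) y) = vinner p y (\<lambda>k. \<Sum>i\<in>I. f i k)"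
  unfolding vinner_def by (subst sum.swap) (simp add: sum_distrib_left mult.commute)

lemma abs_coord_le_1_if_unit: assumes "vinner p y y = 1" "k < p" shows "\<bar>y k\<bar> \<le> 1"
proof -
  have "(y k)\<^sup>2 \<le> vinner p y y"
    unfolding vinner_def power2_eq_square using assms(2) by (intro member_le_sum) auto
  then show ?thesis using assms(1) by (simp add: abs_square_le_1)
qed

lemma emeasure_lborel_sign_scale:
  assumes "c = 1 \<or> c = -1" "A \<in> sets borel"
  shows "emeasure lborel {t::real. c * t \<in> A} = emeasure lborel A"
  using assms(1)
proof
  assume "c = -1"
  then have "{t::real. c * t \<in> A} = uminus -` A \<inter> space lborel" by auto
  also have "emeasure lborel \<dots> = emeasure (distr lborel borel uminus) A"
    using assms(2) by (subst emeasure_distr) auto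
  finally show ?thesis by (simp add: lborel_distr_uminus)
qed simp

text \<open>Involutive signed permutations suffice: reflections of one coordinate and transpositions
  of two already determine the first two moments of the uniform distribution on the sphere.\<close>

definition signed_perm :: "nat \<Rightarrow> (nat \<Rightarrow> nat) \<Rightarrow> (nat \<Rightarrow> real) \<Rightarrow> (nat \<Rightarrow> real) \<Rightarrow> nat \<Rightarrow> real" where
  "signed_perm p \<sigma> s x = restrict (\<lambda>k. s k * x (\<sigma> k)) {..<p}"

definition signed_involution :: "nat \<Rightarrow> (nat \<Rightarrow> nat) \<Rightarrow> (nat \<Rightarrow> real) \<Rightarrow> bool" where
  "signed_involution p \<sigma> s \<longleftrightarrow>
     (\<forall>k<p. \<sigma> k < p \<and> \<sigma> (\<sigma> k) = k \<and> (s k = 1 \<or> s k = -1) \<and> s (\<sigma> k) = s k)"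

lemma signed_involution_reflect: "signed_involution p id (\<lambda>i. if i = k then -1 else 1)"
  unfolding signed_involution_def by auto

lemma signed_involution_swap:
  "k < p \<Longrightarrow> m < p \<Longrightarrow> signed_involution p (\<lambda>i. if i = k then m else if i = m then k else i) (\<lambda>_. 1)"
  unfolding signed_involution_def by auto

context
  fixes p \<sigma> s assumes inv: "signed_involution p \<sigma> s"
begin

private lemma signed_involutionD:
  "k < p \<Longrightarrow> \<sigma> k < p" "k < p \<Longrightarrow> \<sigma> (\<sigma> k) = k"
  "k < p \<Longrightarrow> s k = 1 \<or> s k = -1" "k < p \<Longrightarrow> s (\<sigma> k) = s k"
  using inv unfolding signed_involution_def by auto

lemma signed_involution_bij_betw: "bij_betw \<sigma> {..<p} {..<p}"
  by (rule bij_betw_byWitness[where f'=\<sigma>]) (auto simp: signed_involutionD)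

lemma measurable_signed_perm[measurable]: "signed_perm p \<sigma> s \<in> measurable (Rp p) (Rp p)"
proof -
  have "(\<lambda>x. x (\<sigma> k)) \<in> borel_measurable (PiM {..<p} (\<lambda>_. lborel))" if "k < p" for k
    using signed_involutionD(1)[OF that] by (intro measurable_PiM_component_rev) auto
  then show ?thesis
    unfolding signed_perm_def Rp_def by (intro measurable_restrict) (auto intro!: borel_measurable_times)
qed

lemma vinner_signed_perm: "vinner p (signed_perm p \<sigma> s x) (signed_perm p \<sigma> s x) = vinner p x x"
proof -
  have "vinner p (signed_perm p \<sigma> s x) (signed_perm p \<sigma> s x) = (\<Sum>k<p. x (\<sigma> k) * x (\<sigma> k))"
    unfolding vinner_def signed_perm_def
    by (intro sum.cong refl) (auto dest: signed_involutionD(3))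
  also have "\<dots> = vinner p x x"
    unfolding vinner_def by (rule sum.reindex_bij_betw[OF signed_involution_bij_betw])
  finally show ?thesis .
qed

lemma vnorm_signed_perm: "vnorm p (signed_perm p \<sigma> s x) = vnorm p x"
  unfolding vnorm_def vinner_signed_perm ..

lemma radial_proj_signed_perm:
  "radial_proj p (signed_perm p \<sigma> s x) = signed_perm p \<sigma> s (radial_proj p x)"
  unfolding radial_proj_def vnorm_signed_perm
  by (auto simp: signed_perm_def fun_eq_iff signed_involutionD(1))

lemma vimage_signed_perm_PiE:
  "signed_perm p \<sigma> s -` PiE {..<p} A \<inter> space (Rp p) = PiE {..<p} (\<lambda>j. {t. s j * t \<in> A (\<sigma> j)})"
proof (intro set_eqI iffI)
  fix x assume x: "x \<in> signed_perm p \<sigma> s -` PiE {..<p} A \<inter> space (Rp p)"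
  show "x \<in> PiE {..<p} (\<lambda>j. {t. s j * t \<in> A (\<sigma> j)})"
  proof (rule PiE_I)
    fix j assume j: "j \<in> {..<p}"
    then have "signed_perm p \<sigma> s x (\<sigma> j) \<in> A (\<sigma> j)"
      using x signed_involutionD(1) by (auto simp: PiE_iff)
    then show "x j \<in> {t. s j * t \<in> A (\<sigma> j)}"
      using j signed_involutionD(1,2,4) by (auto simp: signed_perm_def)
  qed (use x in \<open>auto simp: space_Rp PiE_iff extensional_def\<close>)
next
  fix x assume x: "x \<in> PiE {..<p} (\<lambda>j. {t. s j * t \<in> A (\<sigma> j)})"
  have "signed_perm p \<sigma> s x \<in> PiE {..<p} A"
  proof (rule PiE_I)
    fix k assume k: "k \<in> {..<p}"
    then have "s (\<sigma> k) * x (\<sigma> k) \<in> A (\<sigma> (\<sigma> k))"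
      using x signed_involutionD(1) by (auto simp: PiE_iff)
    then show "signed_perm p \<sigma> s x k \<in> A k"
      using k signed_involutionD(2,4) by (auto simp: signed_perm_def)
  qed (simp add: signed_perm_def)
  then show "x \<in> signed_perm p \<sigma> s -` PiE {..<p} A \<inter> space (Rp p)"
    using x by (auto simp: space_Rp PiE_iff)
qed

lemma distr_Rp_signed_perm: "distr (Rp p) (Rp p) (signed_perm p \<sigma> s) = Rp p"
proof -
  interpret product_sigma_finite "\<lambda>_::nat. lborel :: real measure"
    by unfold_locales
  have "distr (Rp p) (Rp p) (signed_perm p \<sigma> s) = PiM {..<p} (\<lambda>_. lborel)"
  proof (rule PiM_eqI)
    fix A :: "nat \<Rightarrow> real set" assume A: "\<And>i. i \<in> {..<p} \<Longrightarrow> A i \<in> sets lborel"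
    have "PiE {..<p} A \<in> sets (Rp p)"
      unfolding Rp_def using A by (intro sets_PiM_I_finite) auto
    then have "emeasure (distr (Rp p) (Rp p) (signed_perm p \<sigma> s)) (PiE {..<p} A)
        = emeasure (Rp p) (PiE {..<p} (\<lambda>j. {t. s j * t \<in> A (\<sigma> j)}))"
      by (subst emeasure_distr) (auto simp: vimage_signed_perm_PiE)
    also have "\<dots> = (\<Prod>j<p. emeasure lborel {t. s j * t \<in> A (\<sigma> j)})"
      unfolding Rp_def using A signed_involutionD by (subst emeasure_PiM) auto
    also have "\<dots> = (\<Prod>j<p. emeasure lborel (A (\<sigma> j)))"
      using A signed_involutionD by (intro prod.cong refl emeasure_lborel_sign_scale) auto
    also have "\<dots> = (\<Prod>i<p. emeasure lborel (A i))"
      by (rule prod.reindex_bij_betw[OF signed_involution_bij_betw])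
    finally show "emeasure (distr (Rp p) (Rp p) (signed_perm p \<sigma> s)) (PiE {..<p} A)
        = (\<Prod>i<p. emeasure lborel (A i))" .
  qed (simp_all add: Rp_def)
  then show ?thesis by (simp add: Rp_def)
qed

lemma distr_unit_ball_signed_perm:
  "distr (uniform_measure (Rp p) (unit_ball p)) (Rp p) (signed_perm p \<sigma> s)
     = uniform_measure (Rp p) (unit_ball p)"
proof (rule measure_eqI)
  let ?T = "signed_perm p \<sigma> s"
  fix A assume "A \<in> sets (distr (uniform_measure (Rp p) (unit_ball p)) (Rp p) ?T)"
  then have A[measurable]: "A \<in> sets (Rp p)" by simp
  have "unit_ball p \<inter> (?T -` A \<inter> space (Rp p)) = ?T -` (A \<inter> unit_ball p) \<inter> space (Rp p)"
    using measurable_space[OF measurable_signed_perm]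
    unfolding unit_ball_def by (auto simp: vnorm_signed_perm)
  then have "emeasure (distr (uniform_measure (Rp p) (unit_ball p)) (Rp p) ?T) A
      = emeasure (distr (Rp p) (Rp p) ?T) (A \<inter> unit_ball p) / emeasure (Rp p) (unit_ball p)"
    by (simp add: emeasure_distr emeasure_uniform_measure)
  then show "emeasure (distr (uniform_measure (Rp p) (unit_ball p)) (Rp p) ?T) A
      = emeasure (uniform_measure (Rp p) (unit_ball p)) A"
    by (simp add: distr_Rp_signed_perm Int_commute)
qed simp

lemma distr_uniform_sphere_signed_perm:
  "distr (uniform_sphere p) (Rp p) (signed_perm p \<sigma> s) = uniform_sphere p"
proof -
  let ?T = "signed_perm p \<sigma> s" and ?B = "uniform_measure (Rp p) (unit_ball p)"
  have "distr (uniform_sphere p) (Rp p) ?T = distr ?B (Rp p) (?T \<circ> radial_proj p)"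
    unfolding uniform_sphere_eq_distr_unit_ball by (intro distr_distr) auto
  also have "\<dots> = distr ?B (Rp p) (radial_proj p \<circ> ?T)"
    by (rule distr_cong) (auto simp: radial_proj_signed_perm)
  also have "\<dots> = distr (distr ?B (Rp p) ?T) (Rp p) (radial_proj p)"
    by (intro distr_distr[symmetric]) auto
  finally show ?thesis
    by (simp add: distr_unit_ball_signed_perm uniform_sphere_eq_distr_unit_ball)
qed

lemma integral_uniform_sphere_signed_perm:
  fixes f :: "(nat \<Rightarrow> real) \<Rightarrow> real"
  assumes "f \<in> borel_measurable (Rp p)"
  shows "(\<integral>y. f y \<partial>uniform_sphere p) = (\<integral>y. f (signed_perm p \<sigma> s y) \<partial>uniform_sphere p)"
proof -
  have "signed_perm p \<sigma> s \<in> measurable (uniform_sphere p) (Rp p)"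
    by (simp add: uniform_sphere_eq_distr_unit_ball)
  then have "(\<integral>y. f y \<partial>distr (uniform_sphere p) (Rp p) (signed_perm p \<sigma> s))
      = (\<integral>y. f (signed_perm p \<sigma> s y) \<partial>uniform_sphere p)"
    using assms by (rule integral_distr)
  then show ?thesis by (simp only: distr_uniform_sphere_signed_perm)
qed

end

lemma AE_unit_ball_vnorm_nonzero:
  assumes "p > 0"
  shows "AE x in uniform_measure (Rp p) (unit_ball p). vnorm p x \<noteq> 0"
proof (rule AE_I')
  let ?N = "PiE {..<p} (\<lambda>_. {0::real})"
  have N: "?N \<in> sets (Rp p)" unfolding Rp_def by (intro sets_PiM_I_finite) auto
  interpret product_sigma_finite "\<lambda>_::nat. lborel :: real measure"
    by unfold_locales
  have "emeasure (Rp p) ?N = (\<Prod>k<p. emeasure lborel {0::real})"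
    unfolding Rp_def by (subst emeasure_PiM) auto
  then have "emeasure (Rp p) ?N = 0" using assms by simp
  then have "emeasure (Rp p) (unit_ball p \<inter> ?N) = 0"
    using N emeasure_mono[of "unit_ball p \<inter> ?N" ?N "Rp p"] by simp
  then have "emeasure (uniform_measure (Rp p) (unit_ball p)) ?N = 0"
    using N by simp
  then show "?N \<in> null_sets (uniform_measure (Rp p) (unit_ball p))"
    using N by (simp add: null_sets_def)
  show "{x \<in> space (uniform_measure (Rp p) (unit_ball p)). \<not> vnorm p x \<noteq> 0} \<subseteq> ?N"
  proof (intro subsetI)
    fix x assume "x \<in> {x \<in> space (uniform_measure (Rp p) (unit_ball p)). \<not> vnorm p x \<noteq> 0}"
    then have x: "x \<in> space (Rp p)" "vnorm p x = 0" by auto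
    then have "\<forall>k\<in>{..<p}. x k * x k = 0"
      unfolding vnorm_def vinner_def by (subst sum_nonneg_eq_0_iff[symmetric]) auto
    then show "x \<in> ?N" using x by (auto simp: space_Rp PiE_iff extensional_def)
  qed
qed

lemma vinner_radial_proj: assumes "vnorm p x \<noteq> 0" shows "vinner p (radial_proj p x) (radial_proj p x) = 1"
proof -
  have "vinner p (radial_proj p x) (radial_proj p x) = vinner p x x / (vnorm p x)\<^sup>2"
    unfolding vinner_def radial_proj_def using assms
    by (simp add: sum_divide_distrib power2_eq_square)
  then show ?thesis using assms by (simp add: vnorm_def vinner_def sum_nonneg)
qed

lemma sets_unit_sphere: "{y \<in> space (Rp p). vinner p y y = 1} \<in> sets (Rp p)"
  by measurable

lemma AE_uniform_sphere_unit: assumes "p > 0" shows "AE y in uniform_sphere p. vinner p y y = 1"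
  unfolding uniform_sphere_eq_distr_unit_ball
  by (subst AE_distr_iff[OF _ sets_unit_sphere])
     (use AE_unit_ball_vnorm_nonzero[OF assms] in \<open>auto simp: vinner_radial_proj\<close>)

context
  fixes p :: nat assumes p_pos: "p > 0" and prob_sphere: "prob_space (uniform_sphere p)"
begin

interpretation sphere: prob_space "uniform_sphere p" by (rule prob_sphere)

private lemma measurable_coord_sphere[measurable]: "k < p \<Longrightarrow> (\<lambda>y. y k) \<in> borel_measurable (uniform_sphere p)"
  by (simp add: uniform_sphere_eq_distr_unit_ball)

private lemma AE_uniform_sphere_coord_bound: "AE y in uniform_sphere p. \<forall>k<p. \<bar>y k\<bar> \<le> 1"
  using AE_uniform_sphere_unit[OF p_pos] by eventually_elim (auto intro: abs_coord_le_1_if_unit)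

lemma integrable_uniform_sphere_coord: "k < p \<Longrightarrow> integrable (uniform_sphere p) (\<lambda>y. y k)"
  by (rule sphere.integrable_const_bound[where B=1]) (use AE_uniform_sphere_coord_bound in auto)

lemma integrable_uniform_sphere_coord_mult:
  "k < p \<Longrightarrow> m < p \<Longrightarrow> integrable (uniform_sphere p) (\<lambda>y. y k * y m)"
proof (rule sphere.integrable_const_bound[where B=1])
  assume "k < p" "m < p"
  from AE_uniform_sphere_coord_bound show "AE y in uniform_sphere p. norm (y k * y m) \<le> 1"
    by eventually_elim (use \<open>k < p\<close> \<open>m < p\<close> in \<open>auto simp: abs_mult intro: mult_le_one\<close>)
qed simp

lemma integral_uniform_sphere_coord: assumes "k < p" shows "(\<integral>y. y k \<partial>uniform_sphere p) = 0"
  using integral_uniform_sphere_signed_perm[OF signed_involution_reflect, of "\<lambda>y. y k" p k] assms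
  by (simp add: signed_perm_def)

private lemma integral_uniform_sphere_coord_sq:
  assumes "k < p" shows "(\<integral>y. y k * y k \<partial>uniform_sphere p) = 1 / real p"
proof -
  have swap: "(\<integral>y. y j * y j \<partial>uniform_sphere p) = (\<integral>y. y 0 * y 0 \<partial>uniform_sphere p)" if "j < p" for j
    using integral_uniform_sphere_signed_perm[OF signed_involution_swap[OF that p_pos], of "\<lambda>y. y j * y j"] that
    by (simp add: signed_perm_def)
  have "real p * (\<integral>y. y 0 * y 0 \<partial>uniform_sphere p) = (\<Sum>j<p. (\<integral>y. y 0 * y 0 \<partial>uniform_sphere p))"
    by simp
  also have "\<dots> = (\<Sum>j<p. (\<integral>y. y j * y j \<partial>uniform_sphere p))"
    by (rule sum.cong[OF refl swap[symmetric]]) simp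
  also have "\<dots> = (\<integral>y. vinner p y y \<partial>uniform_sphere p)"
    unfolding vinner_def by (rule Bochner_Integration.integral_sum[symmetric]) (auto intro: integrable_uniform_sphere_coord_mult)
  also have "\<dots> = (\<integral>y. 1 \<partial>uniform_sphere p)"
    by (rule integral_cong_AE)
       (use AE_uniform_sphere_unit[OF p_pos] in \<open>auto simp: uniform_sphere_eq_distr_unit_ball\<close>)
  also have "\<dots> = 1"
    by (simp add: sphere.prob_space)
  finally show ?thesis using swap[OF assms] p_pos by (simp add: field_simps)
qed

lemma integral_uniform_sphere_coord_mult:
  assumes "k < p" "m < p"
  shows "(\<integral>y. y k * y m \<partial>uniform_sphere p) = (if k = m then 1 / real p else 0)"
proof (cases "k = m")
  case False
  then show ?thesis
    using integral_uniform_sphere_signed_perm[OF signed_involution_reflect, of "\<lambda>y. y k * y m" p k] assms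
    by (simp add: signed_perm_def)
qed (simp add: assms integral_uniform_sphere_coord_sq)

end

section \<open>Conditional variances of the martingale differences\<close>

lemma (in prob_space) indep_set_mono: "indep_set A B \<Longrightarrow> A' \<subseteq> A \<Longrightarrow> B' \<subseteq> B \<Longrightarrow> indep_set A' B'"
  unfolding indep_set_def by (rule indep_sets_mono_sets) (auto split: bool.split)

definition prefix_sum :: "(nat \<Rightarrow> 'a \<Rightarrow> nat \<Rightarrow> real) \<Rightarrow> nat \<Rightarrow> 'a \<Rightarrow> nat \<Rightarrow> real" where
  "prefix_sum U l x = (\<lambda>k. \<Sum>i\<in>{1..<l}. U i x k)"

lemma prefix_sum_Suc: "1 \<le> l \<Longrightarrow> prefix_sum U (Suc l) x k = prefix_sum U l x k + U l x k"
  unfolding prefix_sum_def by (simp add: atLeastLessThanSuc)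

lemma vinner_prefix_sum_Suc:
  assumes "1 \<le> l"
  shows "vinner p (prefix_sum U (Suc l) x) (prefix_sum U (Suc l) x)
    = vinner p (prefix_sum U l x) (prefix_sum U l x) + 2 * vinner p (U l x) (prefix_sum U l x)
      + vinner p (U l x) (U l x)"
  unfolding vinner_def prefix_sum_Suc[OF assms]
  by (simp add: algebra_simps sum.distrib sum_distrib_left)

lemma mult_vinner_eq_sum: "c * vinner p u a = (\<Sum>k<p. c * a k * u k)"
  unfolding vinner_def sum_distrib_left by (simp add: mult_ac)

lemma mult_vinner_sq_eq_sum: "c * (vinner p u a)\<^sup>2 = (\<Sum>k<p. \<Sum>m<p. c * a k * a m * (u k * u m))"
  unfolding vinner_def power2_eq_square sum_product by (simp add: sum_distrib_left mult_ac)

lemma power2_diff_le: "(a - b)\<^sup>2 \<le> 2 * a\<^sup>2 + 2 * (b\<^sup>2 :: 'a :: linordered_idom)"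
  using sum_squares_ge_zero[of "a + b" 0] by (simp add: power2_eq_square algebra_simps)

lemma integral_sum_sum:
  fixes f :: "'i \<Rightarrow> 'j \<Rightarrow> 'a \<Rightarrow> real"
  assumes "\<And>i j. i \<in> I \<Longrightarrow> j \<in> J \<Longrightarrow> integrable M (f i j)"
  shows "(\<integral>x. (\<Sum>i\<in>I. \<Sum>j\<in>J. f i j x) \<partial>M) = (\<Sum>i\<in>I. \<Sum>j\<in>J. \<integral>x. f i j x \<partial>M)"
proof -
  have "(\<integral>x. (\<Sum>i\<in>I. \<Sum>j\<in>J. f i j x) \<partial>M) = (\<Sum>i\<in>I. \<integral>x. (\<Sum>j\<in>J. f i j x) \<partial>M)"
    using assms by (simp add: Bochner_Integration.integral_sum integrable_sum)
  also have "\<dots> = (\<Sum>i\<in>I. \<Sum>j\<in>J. \<integral>x. f i j x \<partial>M)"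
    using assms by (intro sum.cong refl Bochner_Integration.integral_sum)
  finally show ?thesis .
qed

lemma abs_vinner_le:
  assumes "\<And>k. k < p \<Longrightarrow> \<bar>f k\<bar> \<le> a" and "\<And>k. k < p \<Longrightarrow> \<bar>g k\<bar> \<le> b"
  shows "\<bar>vinner p f g\<bar> \<le> real p * (a * b)"
proof -
  have "\<bar>vinner p f g\<bar> \<le> (\<Sum>k<p. \<bar>f k\<bar> * \<bar>g k\<bar>)"
    unfolding vinner_def using sum_abs[of "\<lambda>k. f k * g k" "{..<p}"] by (simp add: abs_mult)
  also have "\<dots> \<le> (\<Sum>k<p. a * b)"
    using assms by (intro sum_mono mult_mono') auto
  finally show ?thesis by simp
qed

lemma sum_prefix_sums:
  "(\<Sum>l\<in>{1..n}. \<Sum>j\<in>{1..<l}. f j) = (\<Sum>j\<in>{1..n}. real (n - j) * (f j :: real))"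
proof (induction n)
  case (Suc n)
  have "(\<Sum>l\<in>{1..Suc n}. \<Sum>j\<in>{1..<l}. f j) = (\<Sum>j\<in>{1..n}. real (n - j) * f j) + (\<Sum>j\<in>{1..n}. f j)"
    using Suc by (simp add: atLeastLessThanSuc_atLeastAtMost)
  also have "\<dots> = (\<Sum>j\<in>{1..Suc n}. real (Suc n - j) * f j)"
    by (simp add: sum.distrib[symmetric] Suc_diff_le algebra_simps)
  finally show ?case .
qed simp

definition natural_filtration :: "'a measure \<Rightarrow> nat \<Rightarrow> (nat \<Rightarrow> 'a \<Rightarrow> nat \<Rightarrow> real) \<Rightarrow> nat \<Rightarrow> 'a measure" where
  "natural_filtration M p U j = gen_sigma M (Rp p) U {1..j}"

locale sphere_sample = prob_space M
  for M :: "'a measure" and U :: "nat \<Rightarrow> 'a \<Rightarrow> nat \<Rightarrow> real" and n p :: nat +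
  assumes p_pos: "0 < p" and n_pos: "1 \<le> n"
    and indep_U: "indep_vars (\<lambda>_. Rp p) U {1..n}"
    and distr_U: "\<And>i. i \<in> {1..n} \<Longrightarrow> distr M (Rp p) (U i) = uniform_sphere p"
begin

abbreviation \<F> :: "nat \<Rightarrow> 'a measure" where
  "\<F> j \<equiv> natural_filtration M p U j"

abbreviation S :: "nat \<Rightarrow> 'a \<Rightarrow> nat \<Rightarrow> real" where
  "S l x \<equiv> prefix_sum U l x"

abbreviation X :: "nat \<Rightarrow> 'a \<Rightarrow> real" where
  "X l x \<equiv> vinner p (U l x) (S l x)"

abbreviation Q :: "nat \<Rightarrow> 'a \<Rightarrow> real" where
  "Q l x \<equiv> vinner p (S l x) (S l x)"

lemma measurable_U[measurable]: "i \<in> {1..n} \<Longrightarrow> U i \<in> measurable M (Rp p)"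
  using indep_U unfolding indep_vars_def by auto

lemma prob_space_uniform_sphere: "prob_space (uniform_sphere p)"
  using prob_space_distr[OF measurable_U, of 1] distr_U[of 1] n_pos by simp

lemma sets_\<F>: "sets (\<F> j) = sigma_sets (space M) (\<Union>i\<in>{1..j}. {U i -` A \<inter> space M | A. A \<in> sets (Rp p)})"
  and space_\<F>: "space (\<F> j) = space M"
proof -
  have "(\<Union>i\<in>{1..j}. {U i -` A \<inter> space M | A. A \<in> sets (Rp p)}) \<subseteq> Pow (space M)" by auto
  then show "sets (\<F> j) = sigma_sets (space M) (\<Union>i\<in>{1..j}. {U i -` A \<inter> space M | A. A \<in> sets (Rp p)})"
    "space (\<F> j) = space M"
    unfolding natural_filtration_def gen_sigma_def by (simp_all add: sets_measure_of space_measure_of)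
qed

lemma subalgebra_\<F>: assumes "j \<le> n" shows "subalgebra M (\<F> j)"
proof -
  have "(\<Union>i\<in>{1..j}. {U i -` A \<inter> space M | A. A \<in> sets (Rp p)}) \<subseteq> sets M"
    using assms by (auto intro!: measurable_sets[OF measurable_U])
  then have "sets (\<F> j) \<subseteq> sets M"
    unfolding sets_\<F> by (rule sets.sigma_sets_subset)
  then show ?thesis
    unfolding subalgebra_def space_\<F> by simp
qed

lemma sigma_finite_subalgebra_\<F>: "j \<le> n \<Longrightarrow> sigma_finite_subalgebra M (\<F> j)"
  by (intro finite_measure_subalgebra_is_sigma_finite)
     (simp add: finite_measure_subalgebra_def finite_measure_subalgebra_axioms_def
       subalgebra_\<F> finite_measure_axioms)

lemma measurable_\<F>_imp_measurable: "j \<le> n \<Longrightarrow> f \<in> measurable (\<F> j) N \<Longrightarrow> f \<in> measurable M N"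
  by (rule measurable_from_subalg[OF subalgebra_\<F>])

lemma measurable_U_\<F>: assumes "j \<le> n" "i \<in> {1..j}" shows "U i \<in> measurable (\<F> j) (Rp p)"
proof (rule measurableI)
  show "U i x \<in> space (Rp p)" if "x \<in> space (\<F> j)" for x
    using that assms measurable_space[OF measurable_U[of i]] unfolding space_\<F> by auto
  show "U i -` A \<inter> space (\<F> j) \<in> sets (\<F> j)" if "A \<in> sets (Rp p)" for A
  proof -
    have "U i -` A \<inter> space M \<in> (\<Union>i\<in>{1..j}. {U i -` A \<inter> space M | A. A \<in> sets (Rp p)})"
      using that assms by blast
    then show ?thesis unfolding sets_\<F> space_\<F> by (rule sigma_sets.Basic)
  qed
qed

lemma measurable_coord_U_\<F>:
  "j \<le> n \<Longrightarrow> i \<in> {1..j} \<Longrightarrow> k < p \<Longrightarrow> (\<lambda>x. U i x k) \<in> borel_measurable (\<F> j)"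
  using measurable_comp[OF measurable_U_\<F> measurable_coord_Rp] by (simp add: comp_def)

lemma measurable_prefix_sum_\<F>:
  assumes "j \<le> n" "l \<le> j + 1" "k < p"
  shows "(\<lambda>x. S l x k) \<in> borel_measurable (\<F> j)"
  unfolding prefix_sum_def
proof (rule borel_measurable_sum)
  show "(\<lambda>x. U i x k) \<in> borel_measurable (\<F> j)" if "i \<in> {1..<l}" for i
    using that assms by (intro measurable_coord_U_\<F>) auto
qed

lemma measurable_X_\<F>: "j \<le> n \<Longrightarrow> l \<in> {1..j} \<Longrightarrow> X l \<in> borel_measurable (\<F> j)"
  by (rule borel_measurable_vinner) (auto intro: measurable_coord_U_\<F> measurable_prefix_sum_\<F>)

lemma measurable_Q_\<F>: "j \<le> n \<Longrightarrow> l \<le> j + 1 \<Longrightarrow> Q l \<in> borel_measurable (\<F> j)"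
  by (rule borel_measurable_vinner) (auto intro: measurable_prefix_sum_\<F>)

lemma measurable_X: "l \<in> {1..n} \<Longrightarrow> X l \<in> borel_measurable M"
  by (rule measurable_\<F>_imp_measurable[OF order_refl measurable_X_\<F>]) auto

lemma measurable_Q: "l \<in> {1..n} \<Longrightarrow> Q l \<in> borel_measurable M"
  by (rule measurable_\<F>_imp_measurable[OF order_refl measurable_Q_\<F>]) auto

lemma AE_U_unit: "AE x in M. \<forall>i\<in>{1..n}. vinner p (U i x) (U i x) = 1"
proof (rule AE_finite_allI)
  fix i assume i: "i \<in> {1..n}"
  have "AE y in distr M (Rp p) (U i). vinner p y y = 1"
    unfolding distr_U[OF i] by (rule AE_uniform_sphere_unit[OF p_pos])
  then show "AE x in M. vinner p (U i x) (U i x) = 1"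
    by (rule AE_distr_iff[OF measurable_U[OF i] sets_unit_sphere, THEN iffD1])
qed simp

lemma AE_bounds:
  "AE x in M. (\<forall>l\<in>{1..n}. \<forall>k<p. \<bar>U l x k\<bar> \<le> 1 \<and> \<bar>S l x k\<bar> \<le> n)
    \<and> (\<forall>l\<in>{1..n}. \<bar>X l x\<bar> \<le> real p * real n \<and> \<bar>Q l x\<bar> \<le> real p * (real n)\<^sup>2)"
  using AE_U_unit
proof eventually_elim
  case (elim x)
  then have U: "\<bar>U l x k\<bar> \<le> 1" if "l \<in> {1..n}" "k < p" for l k
    using that by (auto intro: abs_coord_le_1_if_unit)
  have "\<bar>S l x k\<bar> \<le> (\<Sum>i\<in>{1..<l}. \<bar>U i x k\<bar>)" for l k
    unfolding prefix_sum_def by (rule sum_abs)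
  also have "\<dots> l k \<le> real (card {1..<l})" if "l \<in> {1..n}" "k < p" for l k
    using sum_bounded_above[of "{1..<l}" "\<lambda>i. \<bar>U i x k\<bar>" 1] U that by auto
  finally have S: "\<bar>S l x k\<bar> \<le> n" if "l \<in> {1..n}" "k < p" for l k
    using that by force
  have "\<bar>X l x\<bar> \<le> real p * real n" "\<bar>Q l x\<bar> \<le> real p * (real n)\<^sup>2" if "l \<in> {1..n}" for l
    using abs_vinner_le[of p "U l x" 1 "S l x" n] abs_vinner_le[of p "S l x" n "S l x" n] U S that
    by (simp_all add: power2_eq_square)
  with U S show ?case by blast
qed

lemma indep_\<F>_U:
  assumes l: "l \<in> {1..n}"
  shows "indep_set (sets (\<F> (l - 1))) (sigma_sets (space M) {U l -` A \<inter> space M | A. A \<in> sets (Rp p)})"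
proof -
  define E where "E i = {U i -` A \<inter> space M | A. A \<in> sets (Rp p)}" for i
  define I where "I = case_bool {1..l - 1} {l}"
  have "indep_sets E {1..n}"
    using indep_U unfolding indep_vars_def2 E_def by auto
  then have "indep_sets E (\<Union>j. I j)"
    by (rule indep_sets_mono_index[rotated]) (use l in \<open>auto simp: I_def UNIV_bool\<close>)
  then have "indep_sets (\<lambda>j. sigma_sets (space M) (\<Union>i\<in>I j. E i)) UNIV"
  proof (rule indep_sets_collect_sigma)
    show "Int_stable (E i)" for i
      unfolding Int_stable_def E_def
    proof safe
      fix A B assume "A \<in> sets (Rp p)" "B \<in> sets (Rp p)"
      then show "\<exists>C. U i -` A \<inter> space M \<inter> (U i -` B \<inter> space M) = U i -` C \<inter> space M \<and> C \<in> sets (Rp p)"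
        by (intro exI[of _ "A \<inter> B"]) auto
    qed
    show "disjoint_family_on I UNIV"
      unfolding disjoint_family_on_def I_def using l by (auto split: bool.split)
  qed
  moreover have "(\<lambda>j. sigma_sets (space M) (\<Union>i\<in>I j. E i))
      = case_bool (sets (\<F> (l - 1))) (sigma_sets (space M) (E l))"
    unfolding sets_\<F> by (rule ext) (auto simp: I_def E_def split: bool.split)
  ultimately show ?thesis unfolding indep_set_def E_def by simp
qed

lemma indep_var_\<F>_U:
  fixes G :: "'a \<Rightarrow> real" and h :: "(nat \<Rightarrow> real) \<Rightarrow> real"
  assumes l: "l \<in> {1..n}" and G: "G \<in> borel_measurable (\<F> (l - 1))" and h: "h \<in> borel_measurable (Rp p)"
  shows "indep_var borel G borel (\<lambda>x. h (U l x))"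
  unfolding indep_var_eq
proof (intro conjI)
  show "random_variable borel G"
    using measurable_\<F>_imp_measurable[OF _ G] l by auto
  show "random_variable borel (\<lambda>x. h (U l x))"
    using measurable_comp[OF measurable_U[OF l] h] by (simp add: comp_def)
  have "sigma_sets (space M) {G -` A \<inter> space M |A. A \<in> sets borel} \<subseteq> sets (\<F> (l - 1))"
    using sets.sigma_sets_subset[of "{G -` A \<inter> space M |A. A \<in> sets borel}" "\<F> (l - 1)"]
      measurable_sets[OF G] unfolding space_\<F> by auto
  moreover have "{(\<lambda>x. h (U l x)) -` A \<inter> space M |A. A \<in> sets borel}
      \<subseteq> {U l -` A \<inter> space M |A. A \<in> sets (Rp p)}"
  proof safe
    fix A :: "real set" assume "A \<in> sets borel"
    then have "h -` A \<inter> space (Rp p) \<in> sets (Rp p)"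
      using measurable_sets[OF h] by auto
    moreover have "(\<lambda>x. h (U l x)) -` A \<inter> space M = U l -` (h -` A \<inter> space (Rp p)) \<inter> space M"
      using measurable_space[OF measurable_U[OF l]] by auto
    ultimately show "\<exists>B. (\<lambda>x. h (U l x)) -` A \<inter> space M = U l -` B \<inter> space M \<and> B \<in> sets (Rp p)"
      by blast
  qed
  ultimately show "indep_set (sigma_sets (space M) {G -` A \<inter> space M |A. A \<in> sets borel})
      (sigma_sets (space M) {(\<lambda>x. h (U l x)) -` A \<inter> space M |A. A \<in> sets borel})"
    by (intro indep_set_mono[OF indep_\<F>_U[OF l]] sigma_sets_mono')
qed

lemma integral_\<F>_mult_U:
  fixes G :: "'a \<Rightarrow> real" and h :: "(nat \<Rightarrow> real) \<Rightarrow> real"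
  assumes l: "l \<in> {1..n}" and G: "G \<in> borel_measurable (\<F> (l - 1))" "integrable M G"
    and h: "h \<in> borel_measurable (Rp p)" "integrable (uniform_sphere p) h"
  shows "integrable M (\<lambda>x. G x * h (U l x))"
    and "(\<integral>x. G x * h (U l x) \<partial>M) = (\<integral>x. G x \<partial>M) * (\<integral>y. h y \<partial>uniform_sphere p)"
proof -
  have hU: "integrable M (\<lambda>x. h (U l x))" "(\<integral>x. h (U l x) \<partial>M) = (\<integral>y. h y \<partial>uniform_sphere p)"
    using integral_distr[OF measurable_U[OF l] h(1)] integrable_distr_eq[OF measurable_U[OF l] h(1)]
      h(2) distr_U[OF l] by simp_all
  show "integrable M (\<lambda>x. G x * h (U l x))"
    and "(\<integral>x. G x * h (U l x) \<partial>M) = (\<integral>x. G x \<partial>M) * (\<integral>y. h y \<partial>uniform_sphere p)"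
    using indep_var_integrable[OF indep_var_\<F>_U[OF l G(1) h(1)] G(2) hU(1)]
      indep_var_lebesgue_integral[OF indep_var_\<F>_U[OF l G(1) h(1)] G(2) hU(1)] hU(2)
    by simp_all
qed

text \<open>This is where the law of U l enters: independent of \<F> (l - 1), centred, with covariance
  I/p.\<close>

context
  fixes G :: "'a \<Rightarrow> real" and B :: real and l :: nat
  assumes l: "l \<in> {1..n}"
    and G: "G \<in> borel_measurable (\<F> (l - 1))" "AE x in M. \<bar>G x\<bar> \<le> B"
begin

private lemma G_mult_prefix_sum:
  assumes "k < p"
  shows "(\<lambda>x. G x * S l x k) \<in> borel_measurable (\<F> (l - 1))"
    and "integrable M (\<lambda>x. G x * S l x k)"
proof -
  show meas: "(\<lambda>x. G x * S l x k) \<in> borel_measurable (\<F> (l - 1))"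
    using G(1) measurable_prefix_sum_\<F>[of "l - 1" l] assms l by (intro borel_measurable_times) auto
  show "integrable M (\<lambda>x. G x * S l x k)"
  proof (rule integrable_const_bound[where B="B * real n"])
    show "AE x in M. norm (G x * S l x k) \<le> B * real n"
      using G(2) AE_bounds
    proof eventually_elim
      case (elim x)
      then show ?case
        using l assms by (auto simp: abs_mult intro: mult_mono')
    qed
  qed (rule measurable_\<F>_imp_measurable[OF _ meas], use l in auto)
qed

private lemma G_mult_prefix_sum_sq:
  assumes "k < p" "m < p"
  shows "(\<lambda>x. G x * S l x k * S l x m) \<in> borel_measurable (\<F> (l - 1))"
    and "integrable M (\<lambda>x. G x * S l x k * S l x m)"
proof -
  show meas: "(\<lambda>x. G x * S l x k * S l x m) \<in> borel_measurable (\<F> (l - 1))"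
    using G(1) measurable_prefix_sum_\<F>[of "l - 1" l] assms l by (intro borel_measurable_times) auto
  show "integrable M (\<lambda>x. G x * S l x k * S l x m)"
  proof (rule integrable_const_bound[where B="B * (real n * real n)"])
    show "AE x in M. norm (G x * S l x k * S l x m) \<le> B * (real n * real n)"
      using G(2) AE_bounds
    proof eventually_elim
      case (elim x)
      then have "\<bar>S l x k\<bar> * \<bar>S l x m\<bar> \<le> real n * real n"
        using l assms by (intro mult_mono) auto
      then show ?case
        using elim(1) by (auto simp: abs_mult mult.assoc intro: mult_mono')
    qed
  qed (rule measurable_\<F>_imp_measurable[OF _ meas], use l in auto)
qed

lemma integral_\<F>_mult_X: "(\<integral>x. G x * X l x \<partial>M) = 0"
proof -
  have summand: "integrable M (\<lambda>x. G x * S l x k * U l x k)" "(\<integral>x. G x * S l x k * U l x k \<partial>M) = 0"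
    if k: "k < p" for k
    using integral_\<F>_mult_U[OF l, of "\<lambda>x. G x * S l x k" "\<lambda>y. y k"]
      G_mult_prefix_sum[OF k] integral_uniform_sphere_coord[OF p_pos prob_space_uniform_sphere k]
      integrable_uniform_sphere_coord[OF p_pos prob_space_uniform_sphere k] k
    by (simp_all add: prefix_sum_def)
  have "(\<integral>x. G x * X l x \<partial>M) = (\<integral>x. (\<Sum>k<p. G x * S l x k * U l x k) \<partial>M)"
    by (simp only: mult_vinner_eq_sum)
  also have "\<dots> = 0"
    using summand by (subst Bochner_Integration.integral_sum) auto
  finally show ?thesis .
qed

lemma integral_\<F>_mult_X_sq: "(\<integral>x. G x * (X l x)\<^sup>2 \<partial>M) = (\<integral>x. G x * Q l x \<partial>M) / real p"
proof -
  let ?c = "\<lambda>k m x. G x * S l x k * S l x m"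
  have summand: "integrable M (\<lambda>x. ?c k m x * (U l x k * U l x m))"
    "(\<integral>x. ?c k m x * (U l x k * U l x m) \<partial>M) = (\<integral>x. ?c k m x \<partial>M) * (if k = m then 1 / real p else 0)"
    if km: "k < p" "m < p" for k m
    using integral_\<F>_mult_U[OF l G_mult_prefix_sum_sq[OF km], of "\<lambda>y. y k * y m"]
      integral_uniform_sphere_coord_mult[OF p_pos prob_space_uniform_sphere km]
      integrable_uniform_sphere_coord_mult[OF p_pos prob_space_uniform_sphere km] km
    by simp_all
  have "(\<integral>x. G x * (X l x)\<^sup>2 \<partial>M) = (\<integral>x. (\<Sum>k<p. \<Sum>m<p. ?c k m x * (U l x k * U l x m)) \<partial>M)"
    by (simp only: mult_vinner_sq_eq_sum)
  also have "\<dots> = (\<Sum>k<p. \<Sum>m<p. (\<integral>x. ?c k m x * (U l x k * U l x m) \<partial>M))"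
    by (rule integral_sum_sum) (simp add: summand(1))
  also have "\<dots> = (\<Sum>k<p. \<Sum>m<p. (\<integral>x. ?c k m x \<partial>M) * (if k = m then 1 / real p else 0))"
    using summand(2) by simp
  also have "\<dots> = (\<Sum>k<p. (\<integral>x. ?c k k x \<partial>M)) / real p"
    by (simp add: if_distrib sum_divide_distrib cong: if_cong)
  also have "\<dots> = (\<integral>x. (\<Sum>k<p. ?c k k x) \<partial>M) / real p"
    by (simp add: Bochner_Integration.integral_sum G_mult_prefix_sum_sq(2))
  also have "\<dots> = (\<integral>x. G x * Q l x \<partial>M) / real p"
    by (simp only: mult_vinner_eq_sum)
  finally show ?thesis .
qed

end

lemma integrable_X_mult_X:
  assumes "j \<in> {1..n}" "l \<in> {1..n}"
  shows "integrable M (\<lambda>x. X j x * X l x)"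
proof (rule integrable_const_bound[where B="(real p * real n) * (real p * real n)"])
  show "AE x in M. norm (X j x * X l x) \<le> (real p * real n) * (real p * real n)"
    using AE_bounds by eventually_elim (use assms in \<open>auto simp: abs_mult intro!: mult_mono\<close>)
qed (intro borel_measurable_times measurable_X assms)

lemma integrable_X: "l \<in> {1..n} \<Longrightarrow> integrable M (X l)"
  by (rule integrable_const_bound[where B="real p * real n"])
     (use AE_bounds in \<open>auto intro: measurable_X\<close>)

lemma integrable_Q: "l \<in> {1..n} \<Longrightarrow> integrable M (Q l)"
  by (rule integrable_const_bound[where B="real p * (real n)\<^sup>2"])
     (use AE_bounds in \<open>auto intro: measurable_Q\<close>)

lemma real_cond_exp_X_sq:
  assumes l: "l \<in> {1..n}"
  shows "AE x in M. real_cond_exp M (\<F> (l - 1)) (\<lambda>x. c * (X l x)\<^sup>2) x = c / real p * Q l x"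
proof -
  interpret sigma_finite_subalgebra M "\<F> (l - 1)"
    using l by (intro sigma_finite_subalgebra_\<F>) auto
  show ?thesis
  proof (rule real_cond_exp_charact)
    fix A assume A: "A \<in> sets (\<F> (l - 1))"
    have "(\<integral>x. indicator A x * (X l x)\<^sup>2 \<partial>M) = (\<integral>x. indicator A x * Q l x \<partial>M) / real p"
      by (rule integral_\<F>_mult_X_sq[OF l, where B=1]) (use A in \<open>auto simp: indicator_def\<close>)
    then show "(\<integral>x\<in>A. c * (X l x)\<^sup>2 \<partial>M) = (\<integral>x\<in>A. c / real p * Q l x \<partial>M)"
      by (simp add: set_lebesgue_integral_def mult.left_commute[of "indicator A _"])
  next
    show "integrable M (\<lambda>x. c * (X l x)\<^sup>2)"
      using integrable_X_mult_X[OF l l] by (simp add: power2_eq_square)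
    show "integrable M (\<lambda>x. c / real p * Q l x)"
      using integrable_Q[OF l] by simp
    show "(\<lambda>x. c / real p * Q l x) \<in> borel_measurable (\<F> (l - 1))"
      using l measurable_Q_\<F>[of "l - 1" l] by auto
  qed
qed

lemma integral_X: "l \<in> {1..n} \<Longrightarrow> (\<integral>x. X l x \<partial>M) = 0"
  using integral_\<F>_mult_X[of l "\<lambda>_. 1" 1] by simp

lemma AE_Q_eq: "AE x in M. \<forall>l\<in>{1..n}. Q l x = real l - 1 + 2 * (\<Sum>j\<in>{1..<l}. X j x)"
  using AE_U_unit
proof eventually_elim
  case (elim x)
  have "Q l x = real l - 1 + 2 * (\<Sum>j\<in>{1..<l}. X j x)" if "l \<in> {1..n}" for l
    using that
  proof (induction l)
    case (Suc l)
    show ?case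
    proof (cases "l = 0")
      case False
      then have "l \<in> {1..n}" using Suc.prems by auto
      then show ?thesis
        using Suc.IH elim by (simp add: vinner_prefix_sum_Suc atLeastLessThanSuc)
    qed (simp add: prefix_sum_def vinner_def)
  qed simp
  then show ?case by blast
qed

lemma integral_Q: assumes l: "l \<in> {1..n}" shows "(\<integral>x. Q l x \<partial>M) = real l - 1"
proof -
  have "(\<integral>x. Q l x \<partial>M) = (\<integral>x. real l - 1 + 2 * (\<Sum>j\<in>{1..<l}. X j x) \<partial>M)"
    using AE_Q_eq l
    by (intro integral_cong_AE)
       (auto intro!: measurable_Q measurable_X borel_measurable_add borel_measurable_times borel_measurable_sum)
  also have "\<dots> = real l - 1 + 2 * (\<integral>x. (\<Sum>j\<in>{1..<l}. X j x) \<partial>M)"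
    using l by (subst Bochner_Integration.integral_add) (auto intro!: integrable_sum integrable_X simp: prob_space)
  also have "(\<integral>x. (\<Sum>j\<in>{1..<l}. X j x) \<partial>M) = (\<Sum>j\<in>{1..<l}. \<integral>x. X j x \<partial>M)"
    using l by (intro Bochner_Integration.integral_sum integrable_X) auto
  also have "\<dots> = 0"
    using l by (auto intro!: sum.neutral integral_X)
  finally show ?thesis by simp
qed

lemma integral_X_mult_X:
  assumes j: "j \<in> {1..n}" and l: "l \<in> {1..n}"
  shows "(\<integral>x. X j x * X l x \<partial>M) = (if j = l then (real j - 1) / real p else 0)"
proof -
  have orth: "(\<integral>x. X i x * X m x \<partial>M) = 0" if "i \<in> {1..n}" "m \<in> {1..n}" "i < m" for i m
  proof (rule integral_\<F>_mult_X)
    show "X i \<in> borel_measurable (\<F> (m - 1))"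
      using that by (intro measurable_X_\<F>) auto
    show "AE x in M. \<bar>X i x\<bar> \<le> real p * real n"
      using AE_bounds by eventually_elim (use that in auto)
  qed (use that in auto)
  have "(\<integral>x. X l x * X l x \<partial>M) = (real l - 1) / real p"
    using integral_\<F>_mult_X_sq[OF l, of "\<lambda>_. 1" 1] integral_Q[OF l]
    by (simp add: power2_eq_square)
  then show ?thesis
    using orth[OF j l] orth[OF l j] by (auto simp: mult.commute linorder_neq_iff)
qed

abbreviation W :: "'a \<Rightarrow> real" where
  "W x \<equiv> \<Sum>j\<in>{1..n}. real (n - j) * X j x"

lemma W_sq_eq: "(W x)\<^sup>2 = (\<Sum>j\<in>{1..n}. \<Sum>l\<in>{1..n}. real (n - j) * real (n - l) * (X j x * X l x))"
  unfolding power2_eq_square sum_product by (simp add: mult_ac)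

lemma integrable_W_sq: "integrable M (\<lambda>x. (W x)\<^sup>2)"
  unfolding W_sq_eq by (auto intro!: Bochner_Integration.integrable_sum integrable_mult_right integrable_X_mult_X)

lemma integral_W_sq_le: "(\<integral>x. (W x)\<^sup>2 \<partial>M) \<le> (real n)^4 / real p"
proof -
  have "(\<integral>x. (W x)\<^sup>2 \<partial>M)
      = (\<integral>x. (\<Sum>j\<in>{1..n}. \<Sum>l\<in>{1..n}. real (n - j) * real (n - l) * (X j x * X l x)) \<partial>M)"
    unfolding W_sq_eq ..
  also have "\<dots> = (\<Sum>j\<in>{1..n}. \<Sum>l\<in>{1..n}. real (n - j) * real (n - l) * (\<integral>x. X j x * X l x \<partial>M))"
    by (subst integral_sum_sum) (auto intro: integrable_X_mult_X)
  also have "\<dots> = (\<Sum>j\<in>{1..n}. real (n - j) * real (n - j) * ((real j - 1) / real p))"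
    by (simp add: integral_X_mult_X if_distrib cong: if_cong)
  also have "\<dots> \<le> (\<Sum>j\<in>{1..n}. real n * real n * (real n / real p))"
    using p_pos by (intro sum_mono mult_mono divide_right_mono) auto
  also have "\<dots> = (real n)^4 / real p"
    by (simp add: power4_eq_xxxx)
  finally show ?thesis .
qed

abbreviation D :: "nat \<Rightarrow> 'a \<Rightarrow> real" where
  "D l x \<equiv> sqrt (2 * real p) / real n * (\<Sum>i\<in>{1..<l}. vinner p (U i x) (U l x))"

abbreviation \<sigma>2 :: "nat \<Rightarrow> 'a \<Rightarrow> real" where
  "\<sigma>2 l x \<equiv> real_cond_exp M (\<F> (l - 1)) (\<lambda>y. (D l y)\<^sup>2) x"

lemma D_sq_eq: "(D l x)\<^sup>2 = 2 * real p / (real n)\<^sup>2 * (X l x)\<^sup>2"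
  by (simp add: sum_vinner_left prefix_sum_def power_mult_distrib power_divide)

lemma AE_\<sigma>2_eq: "AE x in M. \<forall>l\<in>{1..n}. \<sigma>2 l x = 2 / (real n)\<^sup>2 * Q l x"
proof (rule AE_finite_allI)
  fix l assume l: "l \<in> {1..n}"
  have "(\<lambda>y. (D l y)\<^sup>2) = (\<lambda>y. 2 * real p / (real n)\<^sup>2 * (X l y)\<^sup>2)"
    by (intro ext D_sq_eq)
  then show "AE x in M. \<sigma>2 l x = 2 / (real n)\<^sup>2 * Q l x"
    using real_cond_exp_X_sq[OF l, of "2 * real p / (real n)\<^sup>2"] p_pos by simp
qed simp

lemma AE_sum_\<sigma>2_minus_1_eq: "AE x in M. (\<Sum>l\<in>{1..n}. \<sigma>2 l x) - 1 = 4 / (real n)\<^sup>2 * W x - 1 / real n"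
  using AE_\<sigma>2_eq AE_Q_eq
proof eventually_elim
  case (elim x)
  have "2 * (\<Sum>l\<in>{1..n}. real l) = real n * (real n + 1)"
    using double_gauss_sum_from_Suc_0[of n, where 'a=real] by simp
  then have gauss: "(\<Sum>l\<in>{1..n}. real l - 1) = real n * (real n - 1) / 2"
    by (simp add: sum_subtractf field_simps)
  have "(\<Sum>l\<in>{1..n}. Q l x) = (\<Sum>l\<in>{1..n}. real l - 1) + 2 * (\<Sum>l\<in>{1..n}. \<Sum>j\<in>{1..<l}. X j x)"
    using elim(2) by (simp add: sum.distrib sum_distrib_left)
  also have "\<dots> = real n * (real n - 1) / 2 + 2 * W x"
    unfolding gauss sum_prefix_sums ..
  finally have "(\<Sum>l\<in>{1..n}. 2 / (real n)\<^sup>2 * Q l x) = 2 / (real n)\<^sup>2 * (real n * (real n - 1) / 2 + 2 * W x)"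
    by (simp only: sum_distrib_left[symmetric])
  moreover have "(\<Sum>l\<in>{1..n}. \<sigma>2 l x) = (\<Sum>l\<in>{1..n}. 2 / (real n)\<^sup>2 * Q l x)"
    using elim(1) by (intro sum.cong) auto
  ultimately show ?case
    using n_pos by (simp add: field_simps power2_eq_square)
qed

lemma nn_integral_sum_\<sigma>2_minus_1_sq_le:
  "(\<integral>\<^sup>+ x. ennreal (((\<Sum>l\<in>{1..n}. \<sigma>2 l x) - 1)\<^sup>2) \<partial>M) \<le> ennreal (32 / real p + 2 / (real n)\<^sup>2)"
proof -
  have bound: "(4 / (real n)\<^sup>2 * w - 1 / real n)\<^sup>2 \<le> 32 / (real n)^4 * w\<^sup>2 + 2 / (real n)\<^sup>2" for w
  proof -
    have "(4 / (real n)\<^sup>2 * w - 1 / real n)\<^sup>2 \<le> 2 * (4 / (real n)\<^sup>2 * w)\<^sup>2 + 2 * (1 / real n)\<^sup>2"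
      by (rule power2_diff_le)
    also have "\<dots> = 32 / (real n)^4 * w\<^sup>2 + 2 / (real n)\<^sup>2"
      using n_pos by (simp add: field_simps power2_eq_square power4_eq_xxxx)
    finally show ?thesis .
  qed
  have "(\<integral>\<^sup>+ x. ennreal (((\<Sum>l\<in>{1..n}. \<sigma>2 l x) - 1)\<^sup>2) \<partial>M)
      \<le> (\<integral>\<^sup>+ x. ennreal (32 / (real n)^4 * (W x)\<^sup>2 + 2 / (real n)\<^sup>2) \<partial>M)"
  proof (rule nn_integral_mono_AE)
    show "AE x in M. ennreal (((\<Sum>l\<in>{1..n}. \<sigma>2 l x) - 1)\<^sup>2)
        \<le> ennreal (32 / (real n)^4 * (W x)\<^sup>2 + 2 / (real n)\<^sup>2)"
      using AE_sum_\<sigma>2_minus_1_eq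
    proof eventually_elim
      case (elim x)
      show ?case unfolding elim by (intro ennreal_leI bound)
    qed
  qed
  also have "\<dots> = ennreal (\<integral>x. 32 / (real n)^4 * (W x)\<^sup>2 + 2 / (real n)\<^sup>2 \<partial>M)"
    by (intro nn_integral_eq_integral AE_I2 add_nonneg_nonneg mult_nonneg_nonneg
        Bochner_Integration.integrable_add integrable_mult_right integrable_W_sq integrable_const) auto
  also have "(\<integral>x. 32 / (real n)^4 * (W x)\<^sup>2 + 2 / (real n)\<^sup>2 \<partial>M)
      = 32 / (real n)^4 * (\<integral>x. (W x)\<^sup>2 \<partial>M) + 2 / (real n)\<^sup>2"
    using integrable_W_sq by (simp add: prob_space)
  also have "\<dots> \<le> ennreal (32 / (real n)^4 * ((real n)^4 / real p) + 2 / (real n)\<^sup>2)"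
    using integral_W_sq_le by (intro ennreal_leI add_right_mono mult_left_mono) auto
  also have "\<dots> = ennreal (32 / real p + 2 / (real n)\<^sup>2)"
    using n_pos by simp
  finally show ?thesis .
qed

end

theorem lemma1:
  fixes p :: "nat \<Rightarrow> nat"
    and M :: "nat \<Rightarrow> 'a measure"
    and U :: "nat \<Rightarrow> nat \<Rightarrow> 'a \<Rightarrow> (nat \<Rightarrow> real)"
  assumes p_pos: "\<forall>n. p n > 0"
    and p_lim: "filterlim p at_top sequentially"
    and prob: "\<forall>n. prob_space (M n)"
    and indep: "\<forall>n. prob_space.indep_vars (M n) (\<lambda>_. Rp (p n)) (U n) {1..n}"
    and unif: "\<forall>n. \<forall>i\<in>{1..n}. distr (M n) (Rp (p n)) (U n i) = uniform_sphere (p n)"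
  shows
    "let D = (\<lambda>n l x. sqrt (2 * real (p n)) / real n *
                (\<Sum>i\<in>{1..<l}. vinner (p n) (U n i x) (U n l x)));
         F = (\<lambda>n l. gen_sigma (M n) (Rp (p n)) (U n) {1..l});
         \<sigma>2 = (\<lambda>n l. real_cond_exp (M n) (F n (l - 1)) (\<lambda>x. (D n l x)\<^sup>2))
     in (\<lambda>n. \<integral>\<^sup>+ x. ennreal (((\<Sum>l\<in>{1..n}. \<sigma>2 n l x) - 1)\<^sup>2) \<partial>M n) \<longlonglongrightarrow> 0"
proof -
  have sample: "sphere_sample (M n) (U n) n (p n)" if "1 \<le> n" for n
    using p_pos prob indep unif that by (simp add: sphere_sample_def sphere_sample_axioms_def)
  have "(\<lambda>n. 32 / real (p n) + 2 / (real n)\<^sup>2) \<longlonglongrightarrow> 0 + 0"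
    by (intro tendsto_add real_tendsto_divide_at_top[OF tendsto_const]
          filterlim_compose[OF filterlim_real_sequentially p_lim]
          filterlim_pow_at_top[OF _ filterlim_real_sequentially]) auto
  then have lim: "(\<lambda>n. ennreal (32 / real (p n) + 2 / (real n)\<^sup>2)) \<longlonglongrightarrow> 0"
    using tendsto_ennrealI by fastforce
  show ?thesis
    unfolding Let_def
    by (rule tendsto_sandwich[OF _ _ tendsto_const lim])
       (simp, rule eventually_sequentiallyI[of 1],
        rule sphere_sample.nn_integral_sum_\<sigma>2_minus_1_sq_le[OF sample, unfolded natural_filtration_def])
qed

end
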